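(* Let $G$, $P$, $w$ be as in the context, and assume all edge costs $w_{ij}$ are positive integer multiples of a number $\delta>0$. Let $s\neq t$ with at least one directed path from $s$ to $t$. For $\alpha\in(0,1)$ write $U_s^{\{t,\overline{o}\}}(\alpha)=L_{st}+\epsilon_{st}(\alpha)$. Then $\epsilon_{st}(\alpha)=\delta\sum_{j\ge1}\alpha^{j\delta}\gamma_j$ with all $\gamma_j\ge 0$, where, letting $l_1=L_{st}<l_2<\dots$ with $l_{i+1}=l_i+\delta$ enumerate the possible walk costs from $s$ to $t$ and $\mathrm{Pr}_{l_i}$ be the probability (under $P$, with $t$ absorbing) that the walk from $s$ reaches $t$ with total cost exactly $l_i$, $\gamma_j=\dfrac{\sum_{i\ge1}\alpha^{l_i}\mathrm{Pr}_{l_{i+j}}}{\sum_{i\ge1}\alpha^{l_i}\mathrm{Pr}_{l_i}}$. In particular $U_s^{\{t,\overline{o}\}}(\alpha)\ge L_{st}$ for all $\alpha\in(0,1)$.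
   Context: $G=(V,E)$ is a finite directed graph; each edge $e_{ij}\in E$ has a positive cost $w_{ij}$. $P$ is a row-stochastic transition matrix with $P_{ij}>0$ iff $e_{ij}\in E$. $L_{st}$ is the minimum total cost of a directed path from $s$ to $t$. Evaporating network $G_\alpha$: Markov chain on $V\cup\{o\}$ with $P_{ij}(\alpha)=P_{ij}\alpha^{w_{ij}}$ ($i,j\in V$), $P_{io}(\alpha)=1-\sum_jP_{ij}\alpha^{w_{ij}}$, $o$ absorbing. With $t$ and $o$ absorbing and $\mathcal T=V\setminus\{t\}$, let $Q_x$ be the probability that the chain from $x$ is absorbed at $t$, $F(\alpha)=(I-P(\alpha)_{\mathcal T\mathcal T})^{-1}$, $F^{\{t,\overline o\}}_{sm}(\alpha)=F_{sm}(\alpha)Q_m/Q_s$, and avoidance hitting cost $U_s^{\{t,\overline{o}\}}(\alpha)=\sum_{m\in\mathcal T}F^{\{t,\overline o\}}_{sm}(\alpha)\,r_m$, $r_m=\sum_{i}P_{mi}(\alpha)w_{mi}Q_i/Q_m$; it equals the expected total cost of the walk from $s$ conditioned on absorption at $t$. *)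

theory Defs
  imports "HOL-Analysis.Analysis"
begin

definition walk_weight :: "('v \<Rightarrow> 'v \<Rightarrow> real) \<Rightarrow> 'v list \<Rightarrow> real" where
  "walk_weight M vs = (\<Prod>k<length vs - 1. M (vs ! k) (vs ! Suc k))"

definition walk_cost :: "('v \<Rightarrow> 'v \<Rightarrow> real) \<Rightarrow> 'v list \<Rightarrow> real" where
  "walk_cost w vs = (\<Sum>k<length vs - 1. w (vs ! k) (vs ! Suc k))"

definition hit_walks :: "'v \<Rightarrow> 'v \<Rightarrow> nat \<Rightarrow> 'v list set" where
  "hit_walks t x n = {vs. length vs = Suc n \<and> hd vs = x \<and> last vs = t \<and> (\<forall>k<n. vs ! k \<noteq> t)}"

definition is_path :: "('v \<times> 'v) set \<Rightarrow> 'v \<Rightarrow> 'v \<Rightarrow> 'v list \<Rightarrow> bool" where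
  "is_path E s t vs \<longleftrightarrow> vs \<noteq> [] \<and> hd vs = s \<and> last vs = t \<and> distinct vs \<and>
     (\<forall>k < length vs - 1. (vs ! k, vs ! Suc k) \<in> E)"

definition min_cost :: "('v \<times> 'v) set \<Rightarrow> ('v \<Rightarrow> 'v \<Rightarrow> real) \<Rightarrow> 'v \<Rightarrow> 'v \<Rightarrow> real" where
  "min_cost E w s t = Min {walk_cost w vs | vs. is_path E s t vs}"

text \<open>Evaporating transition probabilities P_ij(alpha) = P_ij alpha^(w_ij) between vertices of V
  (the remaining mass goes to the absorbing state o, which never reaches t).\<close>
definition Palpha :: "('v \<Rightarrow> 'v \<Rightarrow> real) \<Rightarrow> ('v \<Rightarrow> 'v \<Rightarrow> real) \<Rightarrow> real \<Rightarrow> 'v \<Rightarrow> 'v \<Rightarrow> real" where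
  "Palpha P w \<alpha> i j = P i j * \<alpha> powr (w i j)"

definition absorb_prob :: "('v::finite \<Rightarrow> 'v \<Rightarrow> real) \<Rightarrow> 'v \<Rightarrow> 'v \<Rightarrow> real" where
  "absorb_prob M t x = (\<Sum>n. \<Sum>vs\<in>hit_walks t x n. walk_weight M vs)"

definition cost_prob :: "('v::finite \<Rightarrow> 'v \<Rightarrow> real) \<Rightarrow> ('v \<Rightarrow> 'v \<Rightarrow> real) \<Rightarrow> 'v \<Rightarrow> 'v \<Rightarrow> real \<Rightarrow> real" where
  "cost_prob M w t s l = (\<Sum>n. \<Sum>vs\<in>{vs\<in>hit_walks t s n. walk_cost w vs = l}. walk_weight M vs)"

text \<open>F = (I - M_TT)^{-1} with T = V - {t}, as a function on T x T (zero outside).\<close>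
definition fund :: "('v::finite \<Rightarrow> 'v \<Rightarrow> real) \<Rightarrow> 'v \<Rightarrow> 'v \<Rightarrow> 'v \<Rightarrow> real" where
  "fund M t = (THE X. (\<forall>i j. i \<noteq> t \<and> j \<noteq> t \<longrightarrow>
        X i j - (\<Sum>k\<in>-{t}. M i k * X k j) = (if i = j then 1 else 0)) \<and>
      (\<forall>i j. i = t \<or> j = t \<longrightarrow> X i j = 0))"

definition avoid_cost :: "('v::finite \<Rightarrow> 'v \<Rightarrow> real) \<Rightarrow> ('v \<Rightarrow> 'v \<Rightarrow> real) \<Rightarrow> 'v \<Rightarrow> 'v \<Rightarrow> real \<Rightarrow> real" where
  "avoid_cost P w t s \<alpha> =
     (let M = Palpha P w \<alpha>;
          Q = absorb_prob M t;
          F = fund M t;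
          Fto = (\<lambda>x m. F x m * Q m / Q x);
          r = (\<lambda>m. (\<Sum>i\<in>UNIV. M m i * w m i * Q i) / Q m)
      in (\<Sum>m\<in>-{t}. Fto s m * r m))"

end

theory Submission
  imports Defs
begin

text \<open>Group the walks from \<open>s\<close> that are absorbed at \<open>t\<close> by their cost. A walk of positive
  probability can be shortened to a simple path, so its cost is \<open>L + k\<delta>\<close> with \<open>k \<ge> 0\<close>; and a walk
  of cost \<open>c\<close> has weight \<open>\<alpha>\<^sup>c\<close> times its \<open>P\<close>-probability under the evaporating chain. Hence, with
  \<open>g\<^sub>k = \<alpha>\<^bsup>L + k\<delta>\<^esup> Pr\<^bsub>L + k\<delta>\<^esub>\<close>, the absorption probability is \<open>Q\<^sub>s = \<Sum> g\<^sub>k\<close> and the cost-weighted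
  absorption mass is \<open>N\<^sub>s = \<Sum> (L + k\<delta>) g\<^sub>k\<close>. The avoidance hitting cost equals \<open>N\<^sub>s / Q\<^sub>s\<close>: both
  \<open>N\<close> and \<open>F\<close> applied to the rates solve the first-step equations off \<open>t\<close>, whose solution is
  unique because the evaporating chain is strictly substochastic. So \<open>\<epsilon> = \<delta> \<Sum> k g\<^sub>k / Q\<^sub>s\<close>, and
  writing \<open>k g\<^sub>k\<close> as a sum of \<open>k\<close> copies of \<open>g\<^sub>k\<close> and exchanging the (nonnegative) double series
  gives \<open>\<delta> \<Sum>\<^sub>j \<alpha>\<^bsup>j\<delta>\<^esup> \<gamma>\<^sub>j\<close>, because \<open>\<alpha>\<^bsup>j\<delta>\<^esup> \<gamma>\<^sub>j = \<Sum>\<^sub>i g\<^sub>i\<^sub>+\<^sub>j / Q\<^sub>s\<close>.\<close>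

section \<open>Walks and paths\<close>

fun is_walk :: "('v \<times> 'v) set \<Rightarrow> 'v list \<Rightarrow> bool" where
  "is_walk E (x # y # ys) \<longleftrightarrow> (x, y) \<in> E \<and> is_walk E (y # ys)"
| "is_walk E _ \<longleftrightarrow> True"

lemma walk_cost_Cons_Cons [simp]: "walk_cost w (x # y # ys) = w x y + walk_cost w (y # ys)"
  unfolding walk_cost_def by (simp del: sum.lessThan_Suc add: sum.lessThan_Suc_shift)

lemma walk_weight_Cons_Cons [simp]: "walk_weight M (x # y # ys) = M x y * walk_weight M (y # ys)"
  unfolding walk_weight_def by (simp del: prod.lessThan_Suc add: prod.lessThan_Suc_shift)

lemma walk_cost_Nil_singleton [simp]: "walk_cost w [] = 0" "walk_cost w [x] = 0"
  by (simp_all add: walk_cost_def)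

lemma walk_weight_Nil_singleton [simp]: "walk_weight M [] = 1" "walk_weight M [x] = 1"
  by (simp_all add: walk_weight_def)

lemma walk_cost_append: "walk_cost w (xs @ a # ys) = walk_cost w (xs @ [a]) + walk_cost w (a # ys)"
  by (induction xs rule: induct_list012) auto

lemma is_walk_append: "is_walk E (xs @ a # ys) \<longleftrightarrow> is_walk E (xs @ [a]) \<and> is_walk E (a # ys)"
  by (induction xs rule: induct_list012) auto

lemma is_walk_iff_nth: "is_walk E vs \<longleftrightarrow> (\<forall>k < length vs - 1. (vs ! k, vs ! Suc k) \<in> E)"
proof (induction vs rule: induct_list012)
  case (3 x y ys)
  then show ?case by (auto simp: less_Suc_eq_0_disj)
qed auto

lemma is_path_iff_walk:
  "is_path E u v vs \<longleftrightarrow> vs \<noteq> [] \<and> hd vs = u \<and> last vs = v \<and> distinct vs \<and> is_walk E vs"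
  unfolding is_path_def is_walk_iff_nth by blast

lemma walk_weight_Palpha: "\<alpha> \<noteq> 0 \<Longrightarrow> walk_weight (Palpha P w \<alpha>) vs = walk_weight P vs * \<alpha> powr walk_cost w vs"
  by (induction vs rule: induct_list012) (auto simp: Palpha_def powr_add)

lemma walk_weight_nonneg: "(\<And>i j. M i j \<ge> 0) \<Longrightarrow> walk_weight M vs \<ge> 0"
  by (induction vs rule: induct_list012) auto

lemma walk_cost_nonneg:
  "(\<And>i j. (i, j) \<in> E \<Longrightarrow> w i j \<ge> 0) \<Longrightarrow> is_walk E vs \<Longrightarrow> walk_cost w vs \<ge> 0"
  by (induction vs rule: induct_list012) auto

text \<open>Cutting out a cycle does not increase the cost of a walk when costs are nonnegative.\<close>
lemma walk_contains_cheaper_path: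
  assumes w_nonneg: "\<And>i j. (i, j) \<in> E \<Longrightarrow> w i j \<ge> 0" and "is_walk E vs" "vs \<noteq> []"
  shows "\<exists>ps. is_path E (hd vs) (last vs) ps \<and> walk_cost w ps \<le> walk_cost w vs"
  using assms(2,3)
proof (induction "length vs" arbitrary: vs rule: less_induct)
  case less
  show ?case
  proof (cases "distinct vs")
    case True
    then show ?thesis using less.prems by (auto simp: is_path_iff_walk)
  next
    case False
    then obtain xs ys zs y where vs: "vs = xs @ y # (ys @ y # zs)"
      using not_distinct_decomp by fastforce
    define vs' where "vs' = xs @ y # zs"
    have "is_walk E (xs @ [y]) \<and> is_walk E ((y # ys) @ y # zs)"
      using less.prems(1) is_walk_append[of E xs y "ys @ y # zs"] unfolding vs by simp
    then have walks: "is_walk E (xs @ [y])" "is_walk E ((y # ys) @ [y])" "is_walk E (y # zs)"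
      using is_walk_append[of E "y # ys" y zs] by auto
    have "walk_cost w vs = walk_cost w vs' + walk_cost w ((y # ys) @ [y])"
      using walk_cost_append[of w xs y "ys @ y # zs"] walk_cost_append[of w "y # ys" y zs]
        walk_cost_append[of w xs y zs] unfolding vs vs'_def by simp
    moreover have "walk_cost w ((y # ys) @ [y]) \<ge> 0"
      using walk_cost_nonneg[OF w_nonneg walks(2)] .
    moreover have "is_walk E vs'" "vs' \<noteq> []" "length vs' < length vs"
      using walks is_walk_append[of E xs y zs] unfolding vs vs'_def by simp_all
    moreover have "hd vs' = hd vs" "last vs' = last vs"
      unfolding vs vs'_def by (cases xs; simp)+
    ultimately show ?thesis using less.hyps[of vs'] by force
  qed
qed

lemma finite_path_costs: "finite {walk_cost w vs | vs. is_path E u v (vs :: 'v::finite list)}"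
proof -
  have "{vs. is_path E u v vs} \<subseteq> {xs. set xs \<subseteq> UNIV \<and> distinct xs}"
    by (auto simp: is_path_def)
  then have "finite {vs. is_path E u v vs}"
    by (rule finite_subset) (rule finite_subset_distinct, simp)
  then show ?thesis by (simp add: setcompr_eq_image)
qed

lemma min_cost_le_walk_cost:
  fixes E :: "('v::finite \<times> 'v) set"
  assumes "\<And>i j. (i, j) \<in> E \<Longrightarrow> w i j \<ge> 0" and "is_walk E vs" "vs \<noteq> []"
    and "hd vs = u" "last vs = v"
  shows "min_cost E w u v \<le> walk_cost w vs"
proof -
  obtain ps where ps: "is_path E u v ps" "walk_cost w ps \<le> walk_cost w vs"
    using walk_contains_cheaper_path[of E w vs] assms by blast
  have "min_cost E w u v \<le> walk_cost w ps"
    unfolding min_cost_def by (rule Min_le[OF finite_path_costs]) (use ps in blast)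
  with ps show ?thesis by linarith
qed

section \<open>Absorption of a strictly substochastic chain\<close>

lemma finite_hit_walks: "finite (hit_walks t x n :: 'v::finite list set)"
proof -
  have "hit_walks t x n \<subseteq> {vs. set vs \<subseteq> UNIV \<and> length vs = Suc n}"
    by (auto simp: hit_walks_def)
  moreover have "finite {vs. set vs \<subseteq> (UNIV :: 'v set) \<and> length vs = Suc n}"
    by (rule finite_lists_length_eq) simp
  ultimately show ?thesis by (rule finite_subset)
qed

lemma hit_walks_0: "hit_walks t x 0 = (if x = t then {[t]} else {})"
  by (auto simp: hit_walks_def length_Suc_conv)

lemma hit_walks_Suc_target: "hit_walks t t (Suc n) = {}"
  by (auto simp: hit_walks_def length_Suc_conv)

lemma hit_walks_hd: "vs \<in> hit_walks t x n \<Longrightarrow> \<exists>us. vs = x # us"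
  by (auto simp: hit_walks_def length_Suc_conv)

lemma hit_walks_Suc:
  assumes "x \<noteq> t"
  shows "hit_walks t x (Suc n) = (\<Union>i. (Cons x) ` hit_walks t i n)"
proof (intro set_eqI iffI)
  fix vs assume vs: "vs \<in> hit_walks t x (Suc n)"
  then obtain i us where us: "vs = x # i # us" "length us = n"
    by (auto simp: hit_walks_def length_Suc_conv)
  have "i # us \<in> hit_walks t i n"
    using vs unfolding us hit_walks_def by auto
  then show "vs \<in> (\<Union>i. (Cons x) ` hit_walks t i n)" using us by blast
next
  fix vs assume "vs \<in> (\<Union>i. (Cons x) ` hit_walks t i n)"
  then obtain i us where "vs = x # us" "us \<in> hit_walks t i n" by auto
  then show "vs \<in> hit_walks t x (Suc n)"
    using assms by (auto simp: hit_walks_def less_Suc_eq_0_disj)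
qed

lemma sum_hit_walks_Suc:
  fixes f :: "'v::finite list \<Rightarrow> real"
  assumes "x \<noteq> t"
  shows "(\<Sum>vs\<in>hit_walks t x (Suc n). f vs) = (\<Sum>i\<in>UNIV. \<Sum>us\<in>hit_walks t i n. f (x # us))"
proof -
  have "(\<Sum>vs\<in>hit_walks t x (Suc n). f vs) = (\<Sum>i\<in>UNIV. \<Sum>vs\<in>(Cons x) ` hit_walks t i n. f vs)"
    unfolding hit_walks_Suc[OF assms]
    by (intro sum.UNION_disjoint) (auto simp: finite_hit_walks dest: hit_walks_hd)
  also have "\<dots> = (\<Sum>i\<in>UNIV. \<Sum>us\<in>hit_walks t i n. f (x # us))"
    by (subst sum.reindex) auto
  finally show ?thesis .
qed

lemma sum_UNIV_split_target:
  fixes f :: "'v::finite \<Rightarrow> 'a::comm_monoid_add"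
  shows "(\<Sum>k\<in>UNIV. f k) = f t + (\<Sum>k\<in>-{t}. f k)"
  by (simp add: Compl_eq_Diff_UNIV sum.remove)

primrec taboo_pow :: "('v \<Rightarrow> 'v \<Rightarrow> real) \<Rightarrow> 'v \<Rightarrow> nat \<Rightarrow> 'v \<Rightarrow> 'v \<Rightarrow> real" where
  "taboo_pow M t 0 i j = (if i = j \<and> i \<noteq> t then 1 else 0)"
| "taboo_pow M t (Suc n) i j = (if i \<noteq> t then (\<Sum>k\<in>-{t}. M i k * taboo_pow M t n k j) else 0)"

lemma taboo_pow_target: "taboo_pow M t n i t = 0" "taboo_pow M t n t j = 0"
  by (induction n arbitrary: i) auto

locale absorbing_chain =
  fixes M w :: "'v::finite \<Rightarrow> 'v \<Rightarrow> real" and t :: 'v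
  assumes M_nonneg: "\<And>i j. M i j \<ge> 0"
    and row_sum_less_1: "\<And>i. (\<Sum>j\<in>UNIV. M i j) < 1"
begin

definition max_row_sum :: real where
  "max_row_sum = Max (range (\<lambda>i. \<Sum>j\<in>UNIV. M i j))"

lemma row_sum_le_max: "(\<Sum>j\<in>UNIV. M i j) \<le> max_row_sum"
  unfolding max_row_sum_def by (rule Max_ge) auto

lemma max_row_sum_less_1: "max_row_sum < 1"
proof -
  have "max_row_sum \<in> range (\<lambda>i. \<Sum>j\<in>UNIV. M i j)"
    unfolding max_row_sum_def by (rule Max_in) auto
  then show ?thesis using row_sum_less_1 by auto
qed

lemma max_row_sum_nonneg: "max_row_sum \<ge> 0"
  using row_sum_le_max[of undefined] sum_nonneg[of UNIV "M undefined"] M_nonneg by force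

lemma taboo_row_sum_le_max: "(\<Sum>k\<in>-{t}. M i k) \<le> max_row_sum"
  using sum_mono2[of UNIV "-{t}" "M i"] M_nonneg row_sum_le_max[of i] by force

definition max_abs_cost :: real where
  "max_abs_cost = Max (range (\<lambda>(i, j). \<bar>w i j\<bar>))"

lemma abs_cost_le_max: "\<bar>w i j\<bar> \<le> max_abs_cost"
  unfolding max_abs_cost_def by (rule Max_ge) (auto intro: rev_image_eqI[of "(i, j)"])

definition hit_prob :: "nat \<Rightarrow> 'v \<Rightarrow> real" where
  "hit_prob n x = (\<Sum>vs\<in>hit_walks t x n. walk_weight M vs)"

definition hit_cost :: "nat \<Rightarrow> 'v \<Rightarrow> real" where
  "hit_cost n x = (\<Sum>vs\<in>hit_walks t x n. walk_weight M vs * walk_cost w vs)"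

lemma hit_prob_0: "hit_prob 0 x = (if x = t then 1 else 0)"
  and hit_cost_0: "hit_cost 0 x = 0"
  by (simp_all add: hit_prob_def hit_cost_def hit_walks_0)

lemma hit_prob_Suc_target: "hit_prob (Suc n) t = 0"
  and hit_cost_Suc_target: "hit_cost (Suc n) t = 0"
  by (simp_all add: hit_prob_def hit_cost_def hit_walks_Suc_target)

lemma hit_prob_Suc: "x \<noteq> t \<Longrightarrow> hit_prob (Suc n) x = (\<Sum>i\<in>UNIV. M x i * hit_prob n i)"
  unfolding hit_prob_def
  by (subst sum_hit_walks_Suc) (auto simp: sum_distrib_left dest!: hit_walks_hd intro!: sum.cong)

lemma hit_cost_Suc:
  assumes "x \<noteq> t"
  shows "hit_cost (Suc n) x = (\<Sum>i\<in>UNIV. M x i * (w x i * hit_prob n i + hit_cost n i))"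
proof -
  have "hit_cost (Suc n) x =
      (\<Sum>i\<in>UNIV. \<Sum>us\<in>hit_walks t i n. walk_weight M (x # us) * walk_cost w (x # us))"
    unfolding hit_cost_def by (rule sum_hit_walks_Suc[OF assms])
  also have "\<dots> = (\<Sum>i\<in>UNIV. \<Sum>us\<in>hit_walks t i n.
      M x i * (w x i * walk_weight M us + walk_weight M us * walk_cost w us))"
    by (intro sum.cong refl) (auto simp: algebra_simps dest!: hit_walks_hd)
  also have "\<dots> = (\<Sum>i\<in>UNIV. M x i * (w x i * hit_prob n i + hit_cost n i))"
    unfolding hit_prob_def hit_cost_def
    by (simp add: sum.distrib sum_distrib_left[symmetric] distrib_left)
  finally show ?thesis .
qed

lemma hit_prob_bounds: "0 \<le> hit_prob n x \<and> hit_prob n x \<le> max_row_sum ^ n"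
proof (induction n arbitrary: x)
  case 0
  then show ?case by (simp add: hit_prob_0)
next
  case (Suc n)
  show ?case
  proof (cases "x = t")
    case True
    then show ?thesis using hit_prob_Suc_target max_row_sum_nonneg by simp
  next
    case False
    have "(\<Sum>i\<in>UNIV. M x i * hit_prob n i) \<le> (\<Sum>i\<in>UNIV. M x i) * max_row_sum ^ n"
      unfolding sum_distrib_right using Suc M_nonneg by (intro sum_mono mult_left_mono) auto
    also have "\<dots> \<le> max_row_sum ^ Suc n"
      using row_sum_le_max max_row_sum_nonneg by (simp add: mult_right_mono)
    finally show ?thesis
      unfolding hit_prob_Suc[OF False] using Suc M_nonneg by (auto intro!: sum_nonneg)
  qed
qed

lemma hit_cost_bound: "\<bar>hit_cost n x\<bar> \<le> real n * max_abs_cost * max_row_sum ^ n"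
proof (induction n arbitrary: x)
  case 0
  then show ?case by (simp add: hit_cost_0)
next
  case (Suc n)
  let ?B = "real (Suc n) * max_abs_cost * max_row_sum ^ n"
  show ?case
  proof (cases "x = t")
    case True
    then show ?thesis
      using hit_cost_Suc_target max_row_sum_nonneg abs_cost_le_max[of t t] by simp
  next
    case False
    have term_bound: "\<bar>w x i * hit_prob n i + hit_cost n i\<bar> \<le> ?B" for i
    proof -
      have "\<bar>w x i * hit_prob n i\<bar> \<le> max_abs_cost * max_row_sum ^ n"
        unfolding abs_mult using hit_prob_bounds[of n i] abs_cost_le_max[of x i]
        by (intro mult_mono) auto
      then show ?thesis using Suc[of i] by (simp add: algebra_simps)
    qed
    have "\<bar>hit_cost (Suc n) x\<bar> \<le> (\<Sum>i\<in>UNIV. M x i * \<bar>w x i * hit_prob n i + hit_cost n i\<bar>)"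
      unfolding hit_cost_Suc[OF False]
      by (rule order_trans[OF sum_abs]) (simp add: abs_mult M_nonneg)
    also have "\<dots> \<le> (\<Sum>i\<in>UNIV. M x i) * ?B"
      unfolding sum_distrib_right by (intro sum_mono mult_left_mono term_bound M_nonneg)
    also have "\<dots> \<le> max_row_sum * ?B"
      using row_sum_le_max abs_cost_le_max[of x x] max_row_sum_nonneg
      by (intro mult_right_mono) auto
    finally show ?thesis by (simp add: algebra_simps)
  qed
qed

lemma summable_hit_prob: "summable (\<lambda>n. hit_prob n x)"
  by (rule summable_comparison_test[of _ "\<lambda>n. max_row_sum ^ n"])
     (use hit_prob_bounds max_row_sum_nonneg max_row_sum_less_1 in auto)

lemma summable_hit_cost: "summable (\<lambda>n. hit_cost n x)"
proof (rule summable_comparison_test)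
  have "summable (\<lambda>n. real (Suc n) * max_row_sum ^ n)"
    using geometric_deriv_sums[of max_row_sum] max_row_sum_nonneg max_row_sum_less_1
    by (auto simp: sums_iff)
  then show "summable (\<lambda>n. max_abs_cost * (real (Suc n) * max_row_sum ^ n))"
    by (rule summable_mult)
  have "\<bar>hit_cost n x\<bar> \<le> max_abs_cost * (real (Suc n) * max_row_sum ^ n)" for n
  proof -
    have "max_abs_cost \<ge> 0" using abs_cost_le_max[of x x] by linarith
    then have "real n * max_abs_cost * max_row_sum ^ n \<le> real (Suc n) * max_abs_cost * max_row_sum ^ n"
      using max_row_sum_nonneg by (intro mult_right_mono) auto
    then show ?thesis using hit_cost_bound[of n x] by (simp add: algebra_simps)
  qed
  then show "\<exists>N. \<forall>n\<ge>N. norm (hit_cost n x) \<le> max_abs_cost * (real (Suc n) * max_row_sum ^ n)"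
    by auto
qed

definition absorb_cost :: "'v \<Rightarrow> real" where
  "absorb_cost x = (\<Sum>n. hit_cost n x)"

lemma absorb_prob_eq_suminf: "absorb_prob M t x = (\<Sum>n. hit_prob n x)"
  by (simp add: absorb_prob_def hit_prob_def)

lemma absorb_prob_nonneg: "absorb_prob M t x \<ge> 0"
  unfolding absorb_prob_eq_suminf
  by (rule suminf_nonneg) (use summable_hit_prob hit_prob_bounds in auto)

lemma absorb_cost_target: "absorb_cost t = 0"
  using suminf_split_head[OF summable_hit_cost, of t]
  by (simp add: absorb_cost_def hit_cost_0 hit_cost_Suc_target)

lemma absorb_prob_step:
  assumes "x \<noteq> t"
  shows "absorb_prob M t x = (\<Sum>i\<in>UNIV. M x i * absorb_prob M t i)"
proof -
  have "absorb_prob M t x = (\<Sum>n. hit_prob (Suc n) x)"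
    using suminf_split_head[OF summable_hit_prob, of x] assms
    by (simp add: absorb_prob_eq_suminf hit_prob_0)
  also have "\<dots> = (\<Sum>n. \<Sum>i\<in>UNIV. M x i * hit_prob n i)"
    using assms by (simp add: hit_prob_Suc)
  also have "\<dots> = (\<Sum>i\<in>UNIV. M x i * absorb_prob M t i)"
    unfolding absorb_prob_eq_suminf
    by (subst suminf_sum) (auto intro: summable_mult summable_hit_prob simp: suminf_mult summable_hit_prob)
  finally show ?thesis .
qed

lemma absorb_cost_step:
  assumes "x \<noteq> t"
  shows "absorb_cost x = (\<Sum>i\<in>UNIV. M x i * (w x i * absorb_prob M t i + absorb_cost i))"
proof -
  have summable: "summable (\<lambda>n. w x i * hit_prob n i + hit_cost n i)" for i
    by (intro summable_add summable_mult summable_hit_prob summable_hit_cost)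
  have "absorb_cost x = (\<Sum>n. hit_cost (Suc n) x)"
    using suminf_split_head[OF summable_hit_cost, of x] by (simp add: absorb_cost_def hit_cost_0)
  also have "\<dots> = (\<Sum>n. \<Sum>i\<in>UNIV. M x i * (w x i * hit_prob n i + hit_cost n i))"
    using assms by (simp add: hit_cost_Suc)
  also have "\<dots> = (\<Sum>i\<in>UNIV. M x i * (\<Sum>n. w x i * hit_prob n i + hit_cost n i))"
    by (subst suminf_sum) (auto intro: summable_mult summable simp: suminf_mult summable)
  also have "\<dots> = (\<Sum>i\<in>UNIV. M x i * (w x i * absorb_prob M t i + absorb_cost i))"
    unfolding absorb_prob_eq_suminf absorb_cost_def
    by (simp add: suminf_add[symmetric] suminf_mult summable_mult summable_hit_prob summable_hit_cost)
  finally show ?thesis .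
qed

text \<open>The maximum principle: on the transient states, \<open>M\<close> is a contraction in the sup norm.\<close>
lemma taboo_harmonic_eq_0:
  assumes harmonic: "\<And>i. i \<noteq> t \<Longrightarrow> y i = (\<Sum>k\<in>-{t}. M i k * y k)" and "x \<noteq> t"
  shows "y x = 0"
proof -
  define m where "m = Max ((\<lambda>i. \<bar>y i\<bar>) ` (-{t}))"
  have le_m: "\<bar>y k\<bar> \<le> m" if "k \<noteq> t" for k
    unfolding m_def by (rule Max_ge) (use that in auto)
  have "m \<in> (\<lambda>i. \<bar>y i\<bar>) ` (-{t})"
    unfolding m_def by (rule Max_in) (use \<open>x \<noteq> t\<close> in auto)
  then obtain k where k: "k \<noteq> t" "m = \<bar>y k\<bar>" by auto
  have "m = \<bar>\<Sum>j\<in>-{t}. M k j * y j\<bar>" using harmonic k by simp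
  also have "\<dots> \<le> (\<Sum>j\<in>-{t}. M k j * m)"
    by (rule order_trans[OF sum_abs]) (auto simp: abs_mult M_nonneg intro!: sum_mono mult_left_mono le_m)
  also have "\<dots> \<le> max_row_sum * m"
    unfolding sum_distrib_right[symmetric] using taboo_row_sum_le_max k
    by (intro mult_right_mono) auto
  finally have "m = 0"
    using max_row_sum_less_1 max_row_sum_nonneg k
    by (metis abs_ge_zero mult_le_cancel_right1 not_less order_antisym_conv)
  then show ?thesis using le_m[OF \<open>x \<noteq> t\<close>] by simp
qed

lemma taboo_pow_bounds: "0 \<le> taboo_pow M t n i j \<and> taboo_pow M t n i j \<le> max_row_sum ^ n"
proof (induction n arbitrary: i)
  case (Suc n)
  have "(\<Sum>k\<in>-{t}. M i k * taboo_pow M t n k j) \<le> (\<Sum>k\<in>-{t}. M i k) * max_row_sum ^ n"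
    unfolding sum_distrib_right using Suc M_nonneg by (intro sum_mono mult_left_mono) auto
  also have "\<dots> \<le> max_row_sum ^ Suc n"
    using taboo_row_sum_le_max max_row_sum_nonneg by (simp add: mult_right_mono)
  finally show ?case using Suc M_nonneg max_row_sum_nonneg by (auto intro!: sum_nonneg)
qed simp

lemma summable_taboo_pow: "summable (\<lambda>n. taboo_pow M t n i j)"
  by (rule summable_comparison_test[of _ "\<lambda>n. max_row_sum ^ n"])
     (use taboo_pow_bounds max_row_sum_nonneg max_row_sum_less_1 in auto)

lemma taboo_solution_unique:
  assumes "\<And>i. i \<noteq> t \<Longrightarrow> y i - (\<Sum>k\<in>-{t}. M i k * y k) = b i"
    and "\<And>i. i \<noteq> t \<Longrightarrow> z i - (\<Sum>k\<in>-{t}. M i k * z k) = b i"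
    and "x \<noteq> t"
  shows "y x = z x"
proof -
  have "y x - z x = 0"
  proof (rule taboo_harmonic_eq_0[where y = "\<lambda>i. y i - z i"])
    fix i assume "i \<noteq> t"
    then have "y i - z i = (\<Sum>k\<in>-{t}. M i k * y k) - (\<Sum>k\<in>-{t}. M i k * z k)"
      using assms(1,2)[of i] by simp
    then show "y i - z i = (\<Sum>k\<in>-{t}. M i k * (y k - z k))"
      by (simp add: right_diff_distrib sum_subtractf)
  qed fact
  then show ?thesis by simp
qed

definition taboo_green :: "'v \<Rightarrow> 'v \<Rightarrow> real" where
  "taboo_green i j = (\<Sum>n. taboo_pow M t n i j)"

lemma taboo_green_target: "taboo_green i t = 0" "taboo_green t j = 0"
  by (simp_all add: taboo_green_def taboo_pow_target)

lemma taboo_green_rec: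
  assumes "i \<noteq> t"
  shows "taboo_green i j - (\<Sum>k\<in>-{t}. M i k * taboo_green k j) = (if i = j \<and> j \<noteq> t then 1 else 0)"
proof -
  have "taboo_green i j = taboo_pow M t 0 i j + (\<Sum>n. taboo_pow M t (Suc n) i j)"
    unfolding taboo_green_def using suminf_split_head[OF summable_taboo_pow] by simp
  also have "(\<Sum>n. taboo_pow M t (Suc n) i j) = (\<Sum>k\<in>-{t}. M i k * taboo_green k j)"
    unfolding taboo_green_def using assms
    by (simp add: suminf_sum summable_mult summable_taboo_pow
        suminf_mult[OF summable_taboo_pow, symmetric])
  finally show ?thesis using assms by auto
qed

lemma fund_eq_taboo_green: "fund M t = taboo_green"
  unfolding fund_def
proof (rule the_equality)
  fix X
  assume X: "(\<forall>i j. i \<noteq> t \<and> j \<noteq> t \<longrightarrow>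
      X i j - (\<Sum>k\<in>-{t}. M i k * X k j) = (if i = j then 1 else 0)) \<and>
    (\<forall>i j. i = t \<or> j = t \<longrightarrow> X i j = 0)"
  have "X i j = taboo_green i j" for i j
  proof (cases "i = t \<or> j = t")
    case True
    then show ?thesis using X by (auto simp: taboo_green_target)
  next
    case False
    then show ?thesis
      using taboo_solution_unique[where y = "\<lambda>i. X i j" and z = "\<lambda>i. taboo_green i j"]
        X taboo_green_rec by auto
  qed
  then show "X = taboo_green" by blast
qed (use taboo_green_rec taboo_green_target in auto)

lemma fund_rec:
  "i \<noteq> t \<Longrightarrow> fund M t i j - (\<Sum>k\<in>-{t}. M i k * fund M t k j) = (if i = j \<and> j \<noteq> t then 1 else 0)"
  unfolding fund_eq_taboo_green by (rule taboo_green_rec)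

lemma sum_fund_solves:
  assumes y: "\<And>i. i \<noteq> t \<Longrightarrow> y i - (\<Sum>k\<in>-{t}. M i k * y k) = b i" and "x \<noteq> t"
  shows "(\<Sum>m\<in>-{t}. fund M t x m * b m) = y x"
proof -
  define Y where "Y i = (\<Sum>m\<in>-{t}. fund M t i m * b m)" for i
  have Y: "Y i - (\<Sum>k\<in>-{t}. M i k * Y k) = b i" if "i \<noteq> t" for i
  proof -
    have "Y i - (\<Sum>k\<in>-{t}. M i k * Y k) =
        (\<Sum>m\<in>-{t}. (fund M t i m - (\<Sum>k\<in>-{t}. M i k * fund M t k m)) * b m)"
      unfolding Y_def sum_distrib_left sum_distrib_right left_diff_distrib sum_subtractf
      by (subst sum.swap) (simp add: mult.assoc)
    also have "\<dots> = (\<Sum>m\<in>-{t}. if m = i then b m else 0)"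
      using fund_rec \<open>i \<noteq> t\<close> by (intro sum.cong) auto
    finally show ?thesis using \<open>i \<noteq> t\<close> by simp
  qed
  have "Y x = y x"
    by (rule taboo_solution_unique[OF Y assms])
  then show ?thesis by (simp add: Y_def)
qed

lemma absorb_cost_eq_sum_fund:
  assumes "x \<noteq> t"
  shows "absorb_cost x = (\<Sum>m\<in>-{t}. fund M t x m * (\<Sum>i\<in>UNIV. M m i * w m i * absorb_prob M t i))"
proof (rule sum_fund_solves[OF _ assms, symmetric])
  fix i assume "i \<noteq> t"
  then have "absorb_cost i =
      (\<Sum>k\<in>UNIV. M i k * w i k * absorb_prob M t k) + (\<Sum>k\<in>UNIV. M i k * absorb_cost k)"
    by (simp add: absorb_cost_step distrib_left sum.distrib mult.assoc)
  then show "absorb_cost i - (\<Sum>k\<in>-{t}. M i k * absorb_cost k) =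
      (\<Sum>k\<in>UNIV. M i k * w i k * absorb_prob M t k)"
    using sum_UNIV_split_target[of "\<lambda>k. M i k * absorb_cost k" t] absorb_cost_target by simp
qed

text \<open>States that cannot reach \<open>t\<close> have zero rate, so the junk value \<open>1 / 0 = 0\<close> in the
  conditioned rates is harmless.\<close>
lemma conditioned_cost_eq:
  assumes "x \<noteq> t"
  shows "(\<Sum>m\<in>-{t}. fund M t x m * absorb_prob M t m / absorb_prob M t x *
            ((\<Sum>i\<in>UNIV. M m i * w m i * absorb_prob M t i) / absorb_prob M t m))
       = absorb_cost x / absorb_prob M t x"
proof -
  let ?B = "\<lambda>m. \<Sum>i\<in>UNIV. M m i * w m i * absorb_prob M t i"
  have "fund M t x m * absorb_prob M t m / absorb_prob M t x * (?B m / absorb_prob M t m)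
      = fund M t x m * ?B m / absorb_prob M t x" if "m \<noteq> t" for m
  proof (cases "absorb_prob M t m = 0")
    case True
    then have "(\<Sum>i\<in>UNIV. M m i * absorb_prob M t i) = 0"
      using absorb_prob_step[OF \<open>m \<noteq> t\<close>] by simp
    then have "M m i * absorb_prob M t i = 0" for i
      using sum_nonneg_eq_0_iff[of UNIV "\<lambda>i. M m i * absorb_prob M t i"]
      by (simp add: M_nonneg absorb_prob_nonneg)
    then have "?B m = 0"
      by (intro sum.neutral) (metis mult_eq_0_iff)
    then show ?thesis using True by simp
  qed simp
  then have "(\<Sum>m\<in>-{t}. fund M t x m * absorb_prob M t m / absorb_prob M t x * (?B m / absorb_prob M t m))
      = (\<Sum>m\<in>-{t}. fund M t x m * ?B m) / absorb_prob M t x"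
    unfolding sum_divide_distrib by (intro sum.cong) auto
  then show ?thesis using absorb_cost_eq_sum_fund[OF \<open>x \<noteq> t\<close>] by simp
qed

end

section \<open>Exchanging nonnegative double series\<close>

lemma nonneg_double_series_swap:
  fixes a :: "nat \<Rightarrow> nat \<Rightarrow> real"
  assumes nonneg: "\<And>n k. a n k \<ge> 0" and rows: "\<And>n. summable (a n)"
    and row_sums: "summable (\<lambda>n. suminf (a n))"
  shows "\<And>k. summable (\<lambda>n. a n k)" and "summable (\<lambda>k. \<Sum>n. a n k)"
    and "(\<Sum>k. \<Sum>n. a n k) = (\<Sum>n. \<Sum>k. a n k)"
proof -
  have infsum_eq: "infsum f UNIV = suminf f" if "f summable_on UNIV" for f :: "nat \<Rightarrow> real"
    using has_sum_imp_sums[OF has_sum_infsum[OF that]] by (simp add: sums_iff)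
  have row_has_sum: "(a n has_sum suminf (a n)) UNIV" for n
    using sums_nonneg_imp_has_sum[OF summable_sums[OF rows] nonneg] .
  have row_sums_on: "(\<lambda>n. suminf (a n)) summable_on UNIV"
    by (rule summable_nonneg_imp_summable_on[OF row_sums])
       (use nonneg rows in \<open>auto intro: suminf_nonneg\<close>)
  have joint: "(\<lambda>(n, k). a n k) summable_on UNIV \<times> UNIV"
    by (rule summable_on_SigmaI[where g = "\<lambda>n. suminf (a n)"])
       (use row_has_sum row_sums_on nonneg in auto)
  then have joint_swapped: "(\<lambda>(k, n). a n k) summable_on UNIV \<times> UNIV"
    using summable_on_swap[of "\<lambda>(n, k). a n k" UNIV UNIV] by (simp add: case_prod_unfold)
  have cols: "(\<lambda>n. a n k) summable_on UNIV" for k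
    using summable_on_SigmaD1[of "\<lambda>k n. a n k" UNIV "\<lambda>_. UNIV" k] joint_swapped
    by (simp add: case_prod_unfold)
  show col_summable: "summable (\<lambda>n. a n k)" for k
    by (rule summable_on_imp_summable[OF cols])
  have col_sums_on: "(\<lambda>k. \<Sum>n. a n k) summable_on UNIV"
    using summable_on_SigmaD[of "\<lambda>(k, n). a n k" UNIV "\<lambda>_. UNIV"] joint_swapped cols
    by (simp add: case_prod_unfold infsum_eq)
  show "summable (\<lambda>k. \<Sum>n. a n k)"
    by (rule summable_on_imp_summable[OF col_sums_on])
  have rows_on: "a n summable_on UNIV" for n
    using row_has_sum by (auto simp: summable_on_def)
  have "infsum (\<lambda>n. infsum (a n) UNIV) UNIV = infsum (\<lambda>k. infsum (\<lambda>n. a n k) UNIV) UNIV"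
    by (rule infsum_swap_banach) (use joint in simp)
  then show "(\<Sum>k. \<Sum>n. a n k) = (\<Sum>n. \<Sum>k. a n k)"
    using infsum_eq[OF col_sums_on] infsum_eq[OF row_sums_on] infsum_eq[OF cols] infsum_eq[OF rows_on]
      by simp
qed

lemma suminf_tails_eq_suminf_index_mult:
  fixes g :: "nat \<Rightarrow> real"
  assumes nonneg: "\<And>k. g k \<ge> 0" and summable: "summable (\<lambda>k. real k * g k)"
  shows "summable (\<lambda>j. \<Sum>i. g (i + Suc j))" and "(\<Sum>j. \<Sum>i. g (i + Suc j)) = (\<Sum>k. real k * g k)"
proof -
  define a where "a k j = (if j < k then g k else 0)" for k j
  have row_sums: "a k sums (real k * g k)" for k
    using sums_finite[of "{..<k}" "a k"] by (simp add: a_def)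
  have "a k j \<ge> 0" "summable (a k)" "summable (\<lambda>k. suminf (a k))" for k j
    using nonneg row_sums summable by (auto simp: a_def sums_iff)
  note swap = nonneg_double_series_swap[of a, OF this]
  have "(\<Sum>k. a k j) = (\<Sum>i. a (i + Suc j) j) + (\<Sum>k<Suc j. a k j)" for j
    by (rule suminf_split_initial_segment[OF swap(1)])
  then have col_sums: "(\<Sum>k. a k j) = (\<Sum>i. g (i + Suc j))" for j
    by (simp add: a_def)
  show "summable (\<lambda>j. \<Sum>i. g (i + Suc j))"
    using swap(2) unfolding col_sums .
  show "(\<Sum>j. \<Sum>i. g (i + Suc j)) = (\<Sum>k. real k * g k)"
    using swap(3) row_sums unfolding col_sums by (simp add: sums_iff)
qed

section \<open>Evaporating networks\<close>

locale evaporating_network =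
  fixes E :: "('v::finite \<times> 'v) set" and P w :: "'v \<Rightarrow> 'v \<Rightarrow> real"
    and \<delta> \<alpha> :: real and t :: 'v
  assumes P_nonneg: "\<forall>i j. P i j \<ge> 0"
    and P_stoch: "\<forall>i. (\<Sum>j\<in>UNIV. P i j) = 1"
    and P_edges: "\<forall>i j. P i j > 0 \<longleftrightarrow> (i, j) \<in> E"
    and delta_pos: "\<delta> > 0"
    and w_mult: "\<forall>(i, j)\<in>E. \<exists>k::nat. k \<ge> 1 \<and> w i j = real k * \<delta>"
    and alpha_pos: "0 < \<alpha>" and alpha_less_1: "\<alpha> < 1"
begin

lemma delta_le_cost: "(i, j) \<in> E \<Longrightarrow> \<delta> \<le> w i j"
  using w_mult delta_pos by (force simp: mult_le_cancel_right1)

lemma row_sum_Palpha_less_1: "(\<Sum>j\<in>UNIV. Palpha P w \<alpha> i j) < 1"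
proof -
  have le: "Palpha P w \<alpha> i j \<le> P i j" for j
  proof (cases "(i, j) \<in> E")
    case True
    then have "\<alpha> powr w i j \<le> 1"
      using delta_le_cost delta_pos alpha_pos alpha_less_1 by (intro powr_le1) force+
    then show ?thesis
      unfolding Palpha_def using P_nonneg mult_left_le by blast
  next
    case False
    then have "P i j = 0" using P_edges P_nonneg by (metis less_eq_real_def)
    then show ?thesis by (simp add: Palpha_def)
  qed
  obtain j where "P i j \<noteq> 0"
    using P_stoch by (metis sum.neutral zero_neq_one)
  then have "P i j > 0" "(i, j) \<in> E" using P_nonneg P_edges by (auto simp: less_le)
  moreover have "\<alpha> powr w i j < 1"
    using delta_le_cost[OF \<open>(i, j) \<in> E\<close>] delta_pos alpha_pos alpha_less_1
      powr_less_mono2[of "w i j" \<alpha> 1] by simp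
  ultimately have "Palpha P w \<alpha> i j < P i j" by (simp add: Palpha_def)
  then have "(\<Sum>j\<in>UNIV. Palpha P w \<alpha> i j) < (\<Sum>j\<in>UNIV. P i j)"
    by (intro sum_strict_mono_ex1) (auto intro: le)
  then show ?thesis using P_stoch by simp
qed

sublocale absorbing_chain "Palpha P w \<alpha>" w t
proof
  show "Palpha P w \<alpha> i j \<ge> 0" for i j
    using P_nonneg alpha_pos by (simp add: Palpha_def)
qed (rule row_sum_Palpha_less_1)

lemma is_walk_if_walk_weight_nonzero: "walk_weight P vs \<noteq> 0 \<Longrightarrow> is_walk E vs"
proof (induction vs rule: induct_list012)
  case (3 x y zs)
  then show ?case using P_nonneg P_edges by (auto simp: less_le)
qed auto

lemma walk_cost_multiple: "is_walk E vs \<Longrightarrow> \<exists>m::nat. walk_cost w vs = real m * \<delta>"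
proof (induction vs rule: induct_list012)
  case (3 x y zs)
  then have "(x, y) \<in> E" by simp
  then obtain k :: nat where "w x y = real k * \<delta>"
    using w_mult by blast
  moreover obtain m :: nat where "walk_cost w (y # zs) = real m * \<delta>"
    using 3 by auto
  ultimately have "walk_cost w (x # y # zs) = real (k + m) * \<delta>"
    by (simp add: algebra_simps)
  then show ?case by blast
qed auto

end

locale evaporating_network_from = evaporating_network E P w \<delta> \<alpha> t
  for E :: "('v::finite \<times> 'v) set" and P w \<delta> \<alpha> and t :: 'v +
  fixes s :: 'v
  assumes source_ne_target: "s \<noteq> t" and reachable: "\<exists>vs. is_path E s t vs"
begin

abbreviation L :: real where
  "L \<equiv> min_cost E w s t"

lemma min_cost_multiple: "\<exists>m::nat. L = real m * \<delta>"
proof -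
  have "L \<in> {walk_cost w vs | vs. is_path E s t vs}"
    unfolding min_cost_def by (rule Min_in[OF finite_path_costs]) (use reachable in auto)
  then show ?thesis using walk_cost_multiple by (auto simp: is_path_iff_walk)
qed

lemma min_cost_nonneg: "L \<ge> 0"
  using min_cost_multiple delta_pos by auto

lemma hit_walk_cost_level:
  assumes "vs \<in> hit_walks t s n" and "walk_weight P vs \<noteq> 0"
  shows "\<exists>k::nat. walk_cost w vs = L + real k * \<delta>"
proof -
  have walk: "is_walk E vs" by (rule is_walk_if_walk_weight_nonzero[OF assms(2)])
  then obtain m :: nat where m: "walk_cost w vs = real m * \<delta>"
    using walk_cost_multiple by blast
  obtain m0 :: nat where m0: "L = real m0 * \<delta>"
    using min_cost_multiple by blast
  have "L \<le> walk_cost w vs"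
    by (rule min_cost_le_walk_cost[OF _ walk])
       (use assms(1) delta_le_cost delta_pos in \<open>force simp: hit_walks_def\<close>)+
  then have "m0 \<le> m" using m m0 delta_pos by simp
  then have "walk_cost w vs = L + real (m - m0) * \<delta>"
    using m m0 by (simp add: of_nat_diff algebra_simps)
  then show ?thesis by blast
qed

definition cost_level :: "'v list \<Rightarrow> nat" where
  "cost_level vs = nat \<lfloor>(walk_cost w vs - L) / \<delta>\<rfloor>"

lemma walk_cost_eq_level_iff:
  assumes "vs \<in> hit_walks t s n" and "walk_weight P vs \<noteq> 0"
  shows "walk_cost w vs = L + real k * \<delta> \<longleftrightarrow> cost_level vs = k"
proof -
  obtain k0 :: nat where k0: "walk_cost w vs = L + real k0 * \<delta>"
    using hit_walk_cost_level[OF assms] by blast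
  then have "cost_level vs = k0"
    using delta_pos by (simp add: cost_level_def)
  then show ?thesis using k0 delta_pos by auto
qed

lemma walk_cost_eq_level:
  "vs \<in> hit_walks t s n \<Longrightarrow> walk_weight P vs \<noteq> 0 \<Longrightarrow> walk_cost w vs = L + real (cost_level vs) * \<delta>"
  using walk_cost_eq_level_iff by blast

definition level_prob :: "nat \<Rightarrow> nat \<Rightarrow> real" where
  "level_prob n k = (\<Sum>vs\<in>{vs\<in>hit_walks t s n. walk_cost w vs = L + real k * \<delta>}. walk_weight P vs)"

lemma level_prob_nonneg: "level_prob n k \<ge> 0"
  unfolding level_prob_def using P_nonneg by (intro sum_nonneg walk_weight_nonneg) auto

lemma level_prob_eq_sum_if:
  "level_prob n k = (\<Sum>vs\<in>hit_walks t s n. if cost_level vs = k then walk_weight P vs else 0)"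
  unfolding level_prob_def sum.inter_filter[OF finite_hit_walks]
  using walk_cost_eq_level_iff by (intro sum.cong) auto

lemma scaled_level_prob_le_hit_prob: "\<alpha> powr (L + real k * \<delta>) * level_prob n k \<le> hit_prob n s"
proof -
  have "\<alpha> powr (L + real k * \<delta>) * level_prob n k =
      (\<Sum>vs\<in>{vs\<in>hit_walks t s n. walk_cost w vs = L + real k * \<delta>}. walk_weight (Palpha P w \<alpha>) vs)"
    unfolding level_prob_def sum_distrib_left using alpha_pos
    by (intro sum.cong) (auto simp: walk_weight_Palpha)
  also have "\<dots> \<le> hit_prob n s"
    unfolding hit_prob_def by (intro sum_mono2 finite_hit_walks walk_weight_nonneg M_nonneg) auto
  finally show ?thesis .
qed

lemma summable_level_prob: "summable (\<lambda>n. level_prob n k)"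
proof (rule summable_comparison_test)
  show "summable (\<lambda>n. hit_prob n s / \<alpha> powr (L + real k * \<delta>))"
    by (intro summable_divide summable_hit_prob)
  show "\<exists>N. \<forall>n\<ge>N. norm (level_prob n k) \<le> hit_prob n s / \<alpha> powr (L + real k * \<delta>)"
    using scaled_level_prob_le_hit_prob level_prob_nonneg alpha_pos
    by (simp add: field_simps mult.commute)
qed

lemma cost_prob_eq_suminf_level_prob: "cost_prob P w t s (L + real k * \<delta>) = (\<Sum>n. level_prob n k)"
  by (simp add: cost_prob_def level_prob_def)

lemma cost_prob_nonneg: "cost_prob P w t s (L + real k * \<delta>) \<ge> 0"
  unfolding cost_prob_eq_suminf_level_prob
  by (intro suminf_nonneg summable_level_prob level_prob_nonneg)

lemma sums_level_prob:
  "(\<lambda>k. \<phi> (L + real k * \<delta>) * level_prob n k)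
     sums (\<Sum>vs\<in>hit_walks t s n. walk_weight P vs * \<phi> (walk_cost w vs))"
proof -
  let ?H = "hit_walks t s n"
  have "(\<Sum>vs\<in>?H. walk_weight P vs * \<phi> (walk_cost w vs)) =
      (\<Sum>vs\<in>?H. walk_weight P vs * \<phi> (L + real (cost_level vs) * \<delta>))"
    using walk_cost_eq_level by (intro sum.cong refl) (metis mult_zero_left)
  also have "\<dots> = (\<Sum>k\<in>cost_level ` ?H. \<Sum>vs\<in>{vs\<in>?H. cost_level vs = k}.
      walk_weight P vs * \<phi> (L + real (cost_level vs) * \<delta>))"
    by (rule sum.image_gen[OF finite_hit_walks])
  also have "\<dots> = (\<Sum>k\<in>cost_level ` ?H. \<phi> (L + real k * \<delta>) * level_prob n k)"
    unfolding level_prob_eq_sum_if sum_distrib_left sum.inter_filter[OF finite_hit_walks]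
    by (intro sum.cong refl) (auto simp: mult.commute)
  finally have "(\<Sum>vs\<in>?H. walk_weight P vs * \<phi> (walk_cost w vs)) =
      (\<Sum>k\<in>cost_level ` ?H. \<phi> (L + real k * \<delta>) * level_prob n k)" .
  moreover have "level_prob n k = 0" if "k \<notin> cost_level ` ?H" for k
    unfolding level_prob_eq_sum_if using that by (intro sum.neutral) auto
  ultimately show ?thesis
    by (metis (no_types, lifting) finite_hit_walks finite_imageI mult_eq_0_iff sums_finite)
qed

lemma regroup_by_cost_level:
  assumes nonneg: "\<And>k. \<phi> (L + real k * \<delta>) \<ge> 0"
    and summable: "summable (\<lambda>n. \<Sum>vs\<in>hit_walks t s n. walk_weight P vs * \<phi> (walk_cost w vs))"
  shows "summable (\<lambda>k. \<phi> (L + real k * \<delta>) * cost_prob P w t s (L + real k * \<delta>))"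
    and "(\<Sum>k. \<phi> (L + real k * \<delta>) * cost_prob P w t s (L + real k * \<delta>))
       = (\<Sum>n. \<Sum>vs\<in>hit_walks t s n. walk_weight P vs * \<phi> (walk_cost w vs))"
proof -
  define a where "a = (\<lambda>n k. \<phi> (L + real k * \<delta>) * level_prob n k)"
  have "a n k \<ge> 0" "summable (a n)" "summable (\<lambda>n. suminf (a n))" for n k
    using nonneg level_prob_nonneg sums_level_prob[of \<phi>] summable
    by (auto simp: a_def sums_iff)
  note swap = nonneg_double_series_swap[of a, OF this]
  have cols: "(\<Sum>n. a n k) = \<phi> (L + real k * \<delta>) * cost_prob P w t s (L + real k * \<delta>)" for k
    unfolding a_def cost_prob_eq_suminf_level_prob by (rule suminf_mult[OF summable_level_prob])
  have rows: "suminf (a n) = (\<Sum>vs\<in>hit_walks t s n. walk_weight P vs * \<phi> (walk_cost w vs))" for n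
    using sums_level_prob[of \<phi> n] by (simp add: a_def sums_iff)
  show "summable (\<lambda>k. \<phi> (L + real k * \<delta>) * cost_prob P w t s (L + real k * \<delta>))"
    using swap(2) unfolding cols .
  show "(\<Sum>k. \<phi> (L + real k * \<delta>) * cost_prob P w t s (L + real k * \<delta>))
      = (\<Sum>n. \<Sum>vs\<in>hit_walks t s n. walk_weight P vs * \<phi> (walk_cost w vs))"
    using swap(3) unfolding cols rows .
qed

lemma absorb_prob_source_pos: "absorb_prob (Palpha P w \<alpha>) t s > 0"
proof -
  obtain ps where ps: "is_path E s t ps" using reachable by blast
  define n where "n = length ps - 1"
  have len: "length ps = Suc n" using ps unfolding n_def is_path_def by (cases ps) auto
  have "ps \<in> hit_walks t s n"
    unfolding hit_walks_def
  proof (intro CollectI conjI allI impI)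
    show "hd ps = s" "last ps = t" using ps by (auto simp: is_path_def)
    fix k assume "k < n"
    then have "ps ! k \<noteq> ps ! n" using ps len by (simp add: is_path_def nth_eq_iff_index_eq)
    moreover have "ps ! n = t"
      using \<open>last ps = t\<close> last_conv_nth[of ps] len by (cases ps) auto
    ultimately show "ps ! k \<noteq> t" by simp
  qed (rule len)
  moreover have "walk_weight P ps > 0"
    unfolding walk_weight_def using ps P_edges by (intro prod_pos) (simp add: is_path_def)
  moreover have "walk_weight P vs \<ge> 0" for vs
    using P_nonneg by (simp add: walk_weight_nonneg)
  ultimately have "0 < hit_prob n s"
    unfolding hit_prob_def using alpha_pos
    by (intro order.strict_trans2[OF _ member_le_sum]) (auto simp: walk_weight_Palpha finite_hit_walks)
  also have "hit_prob n s \<le> absorb_prob (Palpha P w \<alpha>) t s"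
    unfolding absorb_prob_eq_suminf
    using sum_le_suminf[OF summable_hit_prob, of "{n}"] hit_prob_bounds by auto
  finally show ?thesis .
qed

definition level_weight :: "nat \<Rightarrow> real" where
  "level_weight k = \<alpha> powr (L + real k * \<delta>) * cost_prob P w t s (L + real k * \<delta>)"

lemma level_weight_nonneg: "level_weight k \<ge> 0"
  unfolding level_weight_def using cost_prob_nonneg by simp

lemma summable_level_weight: "summable level_weight"
  and suminf_level_weight: "(\<Sum>k. level_weight k) = absorb_prob (Palpha P w \<alpha>) t s"
proof -
  have hit: "hit_prob n s = (\<Sum>vs\<in>hit_walks t s n. walk_weight P vs * \<alpha> powr walk_cost w vs)" for n
    unfolding hit_prob_def using alpha_pos by (simp add: walk_weight_Palpha)
  note regroup = regroup_by_cost_level[of "\<lambda>x. \<alpha> powr x", OF _ summable_hit_prob[of s, unfolded hit]]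
  show "summable level_weight" "(\<Sum>k. level_weight k) = absorb_prob (Palpha P w \<alpha>) t s"
    using regroup by (simp_all add: level_weight_def[abs_def] absorb_prob_eq_suminf hit)
qed

lemma summable_level_weight_cost: "summable (\<lambda>k. level_weight k * (L + real k * \<delta>))"
  and suminf_level_weight_cost: "(\<Sum>k. level_weight k * (L + real k * \<delta>)) = absorb_cost s"
proof -
  have hit: "hit_cost n s =
      (\<Sum>vs\<in>hit_walks t s n. walk_weight P vs * (\<alpha> powr walk_cost w vs * walk_cost w vs))" for n
    unfolding hit_cost_def using alpha_pos by (simp add: walk_weight_Palpha mult.assoc)
  have "\<alpha> powr (L + real k * \<delta>) * (L + real k * \<delta>) \<ge> 0" for k
    using min_cost_nonneg delta_pos by simp
  note regroup = regroup_by_cost_level[of "\<lambda>x. \<alpha> powr x * x", OF this summable_hit_cost[of s, unfolded hit]]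
  show "summable (\<lambda>k. level_weight k * (L + real k * \<delta>))"
    "(\<Sum>k. level_weight k * (L + real k * \<delta>)) = absorb_cost s"
    using regroup by (simp_all add: level_weight_def absorb_cost_def hit mult_ac)
qed

lemma summable_index_level_weight: "summable (\<lambda>k. real k * level_weight k)"
proof -
  have "summable (\<lambda>k. (level_weight k * (L + real k * \<delta>) - L * level_weight k) / \<delta>)"
    by (intro summable_divide summable_diff summable_level_weight_cost summable_mult
        summable_level_weight)
  then show ?thesis using delta_pos by (simp add: field_simps)
qed

lemma absorb_cost_source_eq:
  "absorb_cost s = L * absorb_prob (Palpha P w \<alpha>) t s + \<delta> * (\<Sum>k. real k * level_weight k)"
proof -
  have "absorb_cost s = (\<Sum>k. L * level_weight k + \<delta> * (real k * level_weight k))"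
    unfolding suminf_level_weight_cost[symmetric] by (simp add: algebra_simps)
  also have "\<dots> = L * (\<Sum>k. level_weight k) + \<delta> * (\<Sum>k. real k * level_weight k)"
    by (simp add: suminf_add[symmetric] suminf_mult summable_mult summable_level_weight
        summable_index_level_weight)
  finally show ?thesis by (simp add: suminf_level_weight)
qed

definition gamma :: "nat \<Rightarrow> real" where
  "gamma j = (\<Sum>i. \<alpha> powr (L + real i * \<delta>) * cost_prob P w t s (L + real (i + j) * \<delta>))
     / (\<Sum>i. \<alpha> powr (L + real i * \<delta>) * cost_prob P w t s (L + real i * \<delta>))"

lemma scaled_gamma_eq:
  "\<alpha> powr (real j * \<delta>) * gamma j = (\<Sum>i. level_weight (i + j)) / absorb_prob (Palpha P w \<alpha>) t s"
proof -
  have "\<alpha> powr (L + real i * \<delta>) * cost_prob P w t s (L + real (i + j) * \<delta>)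
      = \<alpha> powr (- (real j * \<delta>)) * level_weight (i + j)" for i
    unfolding level_weight_def mult.assoc[symmetric] powr_add[symmetric]
    by (simp add: algebra_simps)
  then have "(\<Sum>i. \<alpha> powr (L + real i * \<delta>) * cost_prob P w t s (L + real (i + j) * \<delta>))
      = \<alpha> powr (- (real j * \<delta>)) * (\<Sum>i. level_weight (i + j))"
    using suminf_mult[OF summable_ignore_initial_segment[OF summable_level_weight]] by simp
  moreover have "\<alpha> powr (real j * \<delta>) * \<alpha> powr (- (real j * \<delta>)) = 1"
    using alpha_pos by (simp add: powr_add[symmetric])
  ultimately show ?thesis
    unfolding gamma_def level_weight_def[symmetric] suminf_level_weight
    by (simp add: mult.assoc[symmetric])
qed

lemma gamma_nonneg: "gamma j \<ge> 0"
proof -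
  have "(\<Sum>i. level_weight (i + j)) \<ge> 0"
    by (intro suminf_nonneg summable_ignore_initial_segment summable_level_weight level_weight_nonneg)
  then have "\<alpha> powr (real j * \<delta>) * gamma j \<ge> 0"
    unfolding scaled_gamma_eq using absorb_prob_source_pos by simp
  then show ?thesis using alpha_pos by (simp add: zero_le_mult_iff)
qed

lemma avoid_cost_eq_ratio:
  "avoid_cost P w t s \<alpha> = absorb_cost s / absorb_prob (Palpha P w \<alpha>) t s"
  unfolding avoid_cost_def Let_def using conditioned_cost_eq[OF source_ne_target] by simp

lemma summable_scaled_gamma: "summable (\<lambda>j. \<alpha> powr (real (Suc j) * \<delta>) * gamma (Suc j))"
  and avoid_cost_eq_series:
    "avoid_cost P w t s \<alpha> = L + \<delta> * (\<Sum>j. \<alpha> powr (real (Suc j) * \<delta>) * gamma (Suc j))"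
proof -
  note tails = suminf_tails_eq_suminf_index_mult[OF level_weight_nonneg summable_index_level_weight]
  show "summable (\<lambda>j. \<alpha> powr (real (Suc j) * \<delta>) * gamma (Suc j))"
    unfolding scaled_gamma_eq by (intro summable_divide tails(1))
  have "(\<Sum>j. \<alpha> powr (real (Suc j) * \<delta>) * gamma (Suc j))
      = (\<Sum>k. real k * level_weight k) / absorb_prob (Palpha P w \<alpha>) t s"
    unfolding scaled_gamma_eq suminf_divide[OF tails(1)] tails(2) ..
  then show "avoid_cost P w t s \<alpha> = L + \<delta> * (\<Sum>j. \<alpha> powr (real (Suc j) * \<delta>) * gamma (Suc j))"
    unfolding avoid_cost_eq_ratio absorb_cost_source_eq using absorb_prob_source_pos
    by (simp add: field_simps)
qed

lemma min_cost_le_avoid_cost: "L \<le> avoid_cost P w t s \<alpha>"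
proof -
  have "(\<Sum>j. \<alpha> powr (real (Suc j) * \<delta>) * gamma (Suc j)) \<ge> 0"
    using gamma_nonneg by (intro suminf_nonneg summable_scaled_gamma) simp
  then show ?thesis using avoid_cost_eq_series delta_pos by simp
qed

end

theorem mainTheorem3:
  fixes E :: "('v::finite \<times> 'v) set"
    and P w :: "'v \<Rightarrow> 'v \<Rightarrow> real"
    and \<delta> \<alpha> :: real and s t :: 'v
  assumes P_nonneg: "\<forall>i j. P i j \<ge> 0"
    and P_stoch: "\<forall>i. (\<Sum>j\<in>UNIV. P i j) = 1"
    and P_edges: "\<forall>i j. P i j > 0 \<longleftrightarrow> (i, j) \<in> E"
    and delta_pos: "\<delta> > 0"
    and w_mult: "\<forall>(i, j)\<in>E. \<exists>k::nat. k \<ge> 1 \<and> w i j = real k * \<delta>"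
    and st: "s \<noteq> t"
    and reach: "\<exists>vs. is_path E s t vs"
    and alpha: "0 < \<alpha>" "\<alpha> < 1"
  defines "L \<equiv> min_cost E w s t"
  defines "l \<equiv> (\<lambda>i::nat. L + (real i - 1) * \<delta>)"
  defines "Pr \<equiv> cost_prob P w t s"
  defines "\<gamma> \<equiv> (\<lambda>j::nat. (\<Sum>i. \<alpha> powr (l (Suc i)) * Pr (l (Suc i + j)))
                          / (\<Sum>i. \<alpha> powr (l (Suc i)) * Pr (l (Suc i))))"
  defines "\<epsilon> \<equiv> avoid_cost P w t s \<alpha> - L"
  shows "summable (\<lambda>j. \<alpha> powr (real (Suc j) * \<delta>) * \<gamma> (Suc j))
      \<and> \<epsilon> = \<delta> * (\<Sum>j. \<alpha> powr (real (Suc j) * \<delta>) * \<gamma> (Suc j))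
      \<and> (\<forall>j\<ge>1. \<gamma> j \<ge> 0)
      \<and> avoid_cost P w t s \<alpha> \<ge> L"
proof -
  interpret evaporating_network_from E P w \<delta> \<alpha> t s
    by unfold_locales (use assms in auto)
  have "\<gamma> = gamma"
    unfolding \<gamma>_def l_def Pr_def L_def gamma_def by (simp add: algebra_simps)
  then show ?thesis
    using summable_scaled_gamma avoid_cost_eq_series gamma_nonneg min_cost_le_avoid_cost
    unfolding \<epsilon>_def L_def by simp
qed

end
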